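(* Let the labels $\{1,\dots,k\}$ be partitioned into $b\ge2$ blocks of sizes $s_1,\dots,s_b$ ($s_1+\dots+s_b=k$), and let $L_{01,b}(i,j)=[i\text{ and }j\text{ are not in the same block}]$ with quadratic surrogate $\Phi_{quad}(f,y)=\frac1{2k}\|f+L_{01,b}(:,y)\|_2^2$. Without constraints on the scores, $$H_{\Phi_{quad},L_{01,b},\mathbb{R}^k}(\varepsilon)=\frac{\varepsilon^2}{4k}\min_{v=1,\dots,b}\frac{2s_v}{s_v+1}\le\frac{\varepsilon^2}{2k},\qquad0\le\varepsilon\le1.$$
   Context: $\mathrm{pred}(f)$ is the smallest index maximizing $f_c$. For $q\in\Delta_k$: $\ell(f,q)=\sum_cq_cL(\mathrm{pred}(f),c)$, $\phi(f,q)=\sum_cq_c\Phi(f,c)$, $\delta\ell(f,q)=\ell(f,q)-\inf_{\hat f\in\mathcal{F}}\ell(\hat f,q)$, $\delta\phi(f,q)=\phi(f,q)-\inf_{\hat f\in\mathcal{F}}\phi(\hat f,q)$; calibration function $H_{\Phi,L,\mathcal{F}}(\varepsilon)=\inf\{\delta\phi(f,q):f\in\mathcal{F},q\in\Delta_k,\delta\ell(f,q)\ge\varepsilon\}$ ($+\infty$ if empty); here $\mathcal{F}=\mathbb{R}^k$. *)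

theory Defs
  imports "HOL-Analysis.Analysis" "HOL-Library.Extended_Real"
begin

text \<open>Labels are 1..k; score vectors and distributions are functions nat => real,
  of which only the values on {1..k} matter.\<close>

definition pred :: "nat \<Rightarrow> (nat \<Rightarrow> real) \<Rightarrow> nat" where
  "pred k f = (LEAST c. c \<in> {1..k} \<and> (\<forall>d\<in>{1..k}. f d \<le> f c))"

definition prob_simplex :: "nat \<Rightarrow> (nat \<Rightarrow> real) set" where
  "prob_simplex k = {q. (\<forall>c\<in>{1..k}. 0 \<le> q c) \<and> (\<Sum>c\<in>{1..k}. q c) = 1}"

definition cond_loss :: "nat \<Rightarrow> (nat \<Rightarrow> nat \<Rightarrow> real) \<Rightarrow> (nat \<Rightarrow> real) \<Rightarrow> (nat \<Rightarrow> real) \<Rightarrow> real" where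
  "cond_loss k L f q = (\<Sum>c\<in>{1..k}. q c * L (pred k f) c)"

definition cond_surr :: "nat \<Rightarrow> ((nat \<Rightarrow> real) \<Rightarrow> nat \<Rightarrow> real) \<Rightarrow> (nat \<Rightarrow> real) \<Rightarrow> (nat \<Rightarrow> real) \<Rightarrow> real" where
  "cond_surr k Phi f q = (\<Sum>c\<in>{1..k}. q c * Phi f c)"

definition excess_loss :: "nat \<Rightarrow> (nat \<Rightarrow> nat \<Rightarrow> real) \<Rightarrow> (nat \<Rightarrow> real) set \<Rightarrow> (nat \<Rightarrow> real) \<Rightarrow> (nat \<Rightarrow> real) \<Rightarrow> real" where
  "excess_loss k L F f q = cond_loss k L f q - (INF g\<in>F. cond_loss k L g q)"

definition excess_surr :: "nat \<Rightarrow> ((nat \<Rightarrow> real) \<Rightarrow> nat \<Rightarrow> real) \<Rightarrow> (nat \<Rightarrow> real) set \<Rightarrow> (nat \<Rightarrow> real) \<Rightarrow> (nat \<Rightarrow> real) \<Rightarrow> real" where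
  "excess_surr k Phi F f q = cond_surr k Phi f q - (INF g\<in>F. cond_surr k Phi g q)"

text \<open>Calibration function; the infimum is taken in ereal so that the empty set gives +infinity.\<close>
definition calib :: "nat \<Rightarrow> ((nat \<Rightarrow> real) \<Rightarrow> nat \<Rightarrow> real) \<Rightarrow> (nat \<Rightarrow> nat \<Rightarrow> real) \<Rightarrow> (nat \<Rightarrow> real) set \<Rightarrow> real \<Rightarrow> ereal" where
  "calib k Phi L F \<epsilon> = Inf {ereal (excess_surr k Phi F f q) | f q.
      f \<in> F \<and> q \<in> prob_simplex k \<and> excess_loss k L F f q \<ge> \<epsilon>}"

text \<open>Block 0-1 loss: blk i is the block (in 1..b) containing label i.\<close>
definition L01b :: "(nat \<Rightarrow> nat) \<Rightarrow> nat \<Rightarrow> nat \<Rightarrow> real" where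
  "L01b blk i j = (if blk i = blk j then 0 else 1)"

definition Phi_quad :: "nat \<Rightarrow> (nat \<Rightarrow> nat \<Rightarrow> real) \<Rightarrow> (nat \<Rightarrow> real) \<Rightarrow> nat \<Rightarrow> real" where
  "Phi_quad k L f y = (1 / (2 * real k)) * (\<Sum>i\<in>{1..k}. (f i + L i y)^2)"

definition block_size :: "nat \<Rightarrow> (nat \<Rightarrow> nat) \<Rightarrow> nat \<Rightarrow> nat" where
  "block_size k blk v = card {i\<in>{1..k}. blk i = v}"

end

theory Submission
  imports Defs
begin

text \<open>Write r i for the conditional risk of predicting label i. Completing the square shows
  that the excess quadratic surrogate of f is (1/2k) times the sum of (f i + r i)^2, while
  the excess block loss is r (pred f) - min r.

  Lower bound: let j0 minimise r and let W be its block, of size s. If the excess loss is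
  at least e > 0, then p = pred f lies outside W, and every i in W has
  f i + r i <= (f p + r p) - e, because f i <= f p and r i = r j0 <= r p - e.
  Minimising a^2 + s (a - e)^2 over a gives s e^2 / (s + 1).

  Upper bound: put mass (1+e)/2 on a label of a block v0 minimising 2s/(s+1) and mass
  (1-e)/2 on a label j of another block, and raise the scores on v0 and on j to the
  optimal common level; a small extra bump on j makes j the prediction, which is why
  the infimum is only approached.\<close>

definition label_risk :: "nat \<Rightarrow> (nat \<Rightarrow> nat \<Rightarrow> real) \<Rightarrow> (nat \<Rightarrow> real) \<Rightarrow> nat \<Rightarrow> real" where
  "label_risk k L q j = (\<Sum>c\<in>{1..k}. q c * L j c)"

definition two_point :: "real \<Rightarrow> nat \<Rightarrow> nat \<Rightarrow> nat \<Rightarrow> real" where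
  "two_point t c0 c1 c = (if c = c0 then t else 0) + (if c = c1 then 1 - t else 0)"

abbreviation min_block_ratio :: "nat \<Rightarrow> (nat \<Rightarrow> nat) \<Rightarrow> nat \<Rightarrow> real" where
  "min_block_ratio k blk b \<equiv>
     Min ((\<lambda>v. 2 * real (block_size k blk v) / (real (block_size k blk v) + 1)) ` {1..b})"

lemma pred_maximal:
  assumes "k > 0"
  shows "pred k f \<in> {1..k} \<and> (\<forall>d\<in>{1..k}. f d \<le> f (pred k f))"
proof -
  have fin: "finite (f ` {1..k})" "f ` {1..k} \<noteq> {}" using assms by auto
  obtain c where "c \<in> {1..k}" "f c = Max (f ` {1..k})"
    using Max_in[OF fin] by auto
  with fin have "c \<in> {1..k} \<and> (\<forall>d\<in>{1..k}. f d \<le> f c)" by auto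
  then show ?thesis unfolding pred_def by (rule LeastI)
qed

lemma pred_eqI:
  assumes "j \<in> {1..k}" "\<And>d. d \<in> {1..k} \<Longrightarrow> d \<noteq> j \<Longrightarrow> f d < f j"
  shows "pred k f = j"
  unfolding pred_def
proof (rule Least_equality)
  show "j \<in> {1..k} \<and> (\<forall>d\<in>{1..k}. f d \<le> f j)" using assms by force
next
  fix y assume "y \<in> {1..k} \<and> (\<forall>d\<in>{1..k}. f d \<le> f y)"
  with assms have "y = j" by force
  then show "j \<le> y" by simp
qed

lemma excess_loss_UNIV:
  assumes "k > 0"
  shows "excess_loss k L UNIV f q
           = label_risk k L q (pred k f) - Min (label_risk k L q ` {1..k})"
proof -
  let ?r = "label_risk k L q"
  have cond_loss: "cond_loss k L g q = ?r (pred k g)" for g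
    unfolding cond_loss_def label_risk_def ..
  have fin: "finite (?r ` {1..k})" "?r ` {1..k} \<noteq> {}" using assms by auto
  obtain j0 where j0: "j0 \<in> {1..k}" "?r j0 = Min (?r ` {1..k})"
    using Min_in[OF fin] by auto
  have "pred k (\<lambda>i. if i = j0 then 1 else 0) = j0"
    by (rule pred_eqI) (use j0 in auto)
  then have "Min (?r ` {1..k}) \<in> range (\<lambda>g. cond_loss k L g q)"
    unfolding cond_loss j0(2)[symmetric] by (metis rangeI)
  moreover have "Min (?r ` {1..k}) \<le> cond_loss k L g q" for g
    unfolding cond_loss using pred_maximal[OF assms, of g] fin by auto
  ultimately have "(INF g. cond_loss k L g q) = Min (?r ` {1..k})"
    by (intro cInf_eq_minimum) auto
  then show ?thesis unfolding excess_loss_def cond_loss by simp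
qed

lemma sum_weighted_square_decomp:
  fixes q l :: "'a \<Rightarrow> real"
  assumes "(\<Sum>c\<in>A. q c) = 1"
  defines "m \<equiv> (\<Sum>c\<in>A. q c * l c)"
  shows "(\<Sum>c\<in>A. q c * (a + l c)^2) = (a + m)^2 + (\<Sum>c\<in>A. q c * (l c - m)^2)"
proof -
  have "q c * (a + l c)^2 = (a + m)^2 * q c + 2 * (a + m) * (q c * l c - m * q c) + q c * (l c - m)^2"
    for c by (simp add: power2_eq_square algebra_simps)
  then have "(\<Sum>c\<in>A. q c * (a + l c)^2)
      = (a + m)^2 * (\<Sum>c\<in>A. q c) + 2 * (a + m) * ((\<Sum>c\<in>A. q c * l c) - m * (\<Sum>c\<in>A. q c))
        + (\<Sum>c\<in>A. q c * (l c - m)^2)"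
    by (simp add: sum.distrib sum_subtractf sum_distrib_left[symmetric] sum_distrib_right[symmetric])
  with assms(1) show ?thesis by (simp add: m_def)
qed

lemma cond_surr_Phi_quad:
  assumes "q \<in> prob_simplex k"
  shows "cond_surr k (Phi_quad k L) g q
           = (1 / (2 * real k)) * (\<Sum>i\<in>{1..k}. (g i + label_risk k L q i)^2)
             + (1 / (2 * real k)) * (\<Sum>i\<in>{1..k}. \<Sum>c\<in>{1..k}. q c * (L i c - label_risk k L q i)^2)"
proof -
  have q1: "(\<Sum>c\<in>{1..k}. q c) = 1" using assms by (simp add: prob_simplex_def)
  have "cond_surr k (Phi_quad k L) g q
      = (1 / (2 * real k)) * (\<Sum>i\<in>{1..k}. \<Sum>c\<in>{1..k}. q c * (g i + L i c)^2)"
    unfolding cond_surr_def Phi_quad_def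
    by (simp add: sum_distrib_left) (subst sum.swap, simp add: algebra_simps)
  also have "\<dots> = (1 / (2 * real k)) * (\<Sum>i\<in>{1..k}. (g i + label_risk k L q i)^2
                     + (\<Sum>c\<in>{1..k}. q c * (L i c - label_risk k L q i)^2))"
    unfolding label_risk_def using sum_weighted_square_decomp[OF q1] by simp
  finally show ?thesis by (simp add: sum.distrib algebra_simps)
qed

lemma excess_surr_Phi_quad:
  assumes "q \<in> prob_simplex k"
  shows "excess_surr k (Phi_quad k L) UNIV f q
           = (1 / (2 * real k)) * (\<Sum>i\<in>{1..k}. (f i + label_risk k L q i)^2)"
proof -
  let ?S = "\<lambda>g. (1 / (2 * real k)) * (\<Sum>i\<in>{1..k}. (g i + label_risk k L q i)^2)"
  define C where "C = (1 / (2 * real k)) * (\<Sum>i\<in>{1..k}. \<Sum>c\<in>{1..k}. q c * (L i c - label_risk k L q i)^2)"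
  have surr: "cond_surr k (Phi_quad k L) g q = ?S g + C" for g
    using cond_surr_Phi_quad[OF assms] C_def by simp
  have "C \<in> range (\<lambda>g. cond_surr k (Phi_quad k L) g q)"
    using surr[of "\<lambda>i. - label_risk k L q i"]
    by (auto intro!: image_eqI[where x = "\<lambda>i. - label_risk k L q i"])
  moreover have "C \<le> cond_surr k (Phi_quad k L) g q" for g
    unfolding surr by (simp add: sum_nonneg)
  ultimately have "(INF g. cond_surr k (Phi_quad k L) g q) = C"
    by (intro cInf_eq_minimum) auto
  then show ?thesis unfolding excess_surr_def surr by simp
qed

subsection \<open>Lower bound\<close>

lemma sum_squares_ge_of_gap:
  fixes a e :: real and x :: "'a \<Rightarrow> real"
  assumes "finite W" "0 \<le> e" "\<And>i. i \<in> W \<Longrightarrow> x i \<le> a - e"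
  shows "real (card W) * e^2 / (real (card W) + 1) \<le> a^2 + (\<Sum>i\<in>W. (x i)^2)"
proof (cases "e \<le> a")
  case True
  have "real (card W) * e^2 / (real (card W) + 1) \<le> e^2"
    by (simp add: divide_le_eq algebra_simps)
  also have "\<dots> \<le> a^2" using True assms(2) by (simp add: power_mono)
  also have "\<dots> \<le> a^2 + (\<Sum>i\<in>W. (x i)^2)" by (simp add: sum_nonneg)
  finally show ?thesis .
next
  case False
  let ?s = "real (card W)"
  have "(e - a)^2 \<le> (x i)^2" if "i \<in> W" for i
  proof -
    have "e - a \<le> \<bar>x i\<bar>" using assms(3)[OF that] False by linarith
    then have "(e - a)^2 \<le> \<bar>x i\<bar>^2" using False by (intro power_mono) auto
    then show ?thesis by simp
  qed
  then have "?s * (e - a)^2 \<le> (\<Sum>i\<in>W. (x i)^2)"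
    using sum_mono[of W "\<lambda>_. (e - a)^2"] by simp
  moreover have "?s * e^2 \<le> (?s + 1) * (a^2 + ?s * (e - a)^2)"
  proof -
    have "(?s + 1) * (a^2 + ?s * (e - a)^2) - ?s * e^2 = ((?s + 1) * a - ?s * e)^2"
      by (simp add: power2_eq_square algebra_simps)
    then show ?thesis by (smt (verit) zero_le_power2)
  qed
  then have "?s * e^2 / (?s + 1) \<le> a^2 + ?s * (e - a)^2"
    by (simp add: divide_le_eq mult.commute)
  ultimately show ?thesis by linarith
qed

lemma excess_surr_lower_bound:
  assumes "k > 0" "blk ` {1..k} = {1..b}" "0 \<le> \<epsilon>" "q \<in> prob_simplex k"
    and "\<epsilon> \<le> excess_loss k (L01b blk) UNIV f q"
  shows "\<epsilon>^2 / (4 * real k) * min_block_ratio k blk b \<le> excess_surr k (Phi_quad k (L01b blk)) UNIV f q"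
proof -
  define r where "r = label_risk k (L01b blk) q"
  define p where "p = pred k f"
  have fin: "finite (r ` {1..k})" "r ` {1..k} \<noteq> {}" using assms(1) by auto
  obtain j0 where j0: "j0 \<in> {1..k}" "r j0 = Min (r ` {1..k})"
    using Min_in[OF fin] by auto
  have p: "p \<in> {1..k}" "\<And>d. d \<in> {1..k} \<Longrightarrow> f d \<le> f p"
    using pred_maximal[OF assms(1), of f] p_def by auto
  have gap: "\<epsilon> \<le> r p - r j0"
    using assms(5) excess_loss_UNIV[OF assms(1)] j0(2) unfolding r_def p_def by simp
  have surr: "excess_surr k (Phi_quad k (L01b blk)) UNIV f q = (1 / (2 * real k)) * (\<Sum>i\<in>{1..k}. (f i + r i)^2)"
    using excess_surr_Phi_quad[OF assms(4)] r_def by simp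
  define W where "W = {i\<in>{1..k}. blk i = blk j0}"
  have r_W: "r i = r j0" if "i \<in> W" for i
    using that unfolding W_def r_def label_risk_def L01b_def by simp
  have ratio: "min_block_ratio k blk b \<le> 2 * real (card W) / (real (card W) + 1)"
    using assms(2) j0(1) unfolding W_def block_size_def by (intro Min_le) auto
  show ?thesis
  proof (cases "\<epsilon> = 0")
    case True
    then show ?thesis using surr by (simp add: sum_nonneg)
  next
    case False
    have "p \<notin> W" using r_W gap False assms(3) by force
    have "f i + r i \<le> (f p + r p) - \<epsilon>" if "i \<in> W" for i
      using p(2)[of i] r_W[OF that] gap that unfolding W_def by auto
    then have "real (card W) * \<epsilon>^2 / (real (card W) + 1) \<le> (f p + r p)^2 + (\<Sum>i\<in>W. (f i + r i)^2)"
      by (intro sum_squares_ge_of_gap) (auto simp: W_def assms(3))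
    also have "\<dots> = (\<Sum>i\<in>insert p W. (f i + r i)^2)"
      using \<open>p \<notin> W\<close> by (simp add: W_def)
    also have "\<dots> \<le> (\<Sum>i\<in>{1..k}. (f i + r i)^2)"
      using p(1) by (intro sum_mono2) (auto simp: W_def)
    finally have sq: "real (card W) * \<epsilon>^2 / (real (card W) + 1) \<le> (\<Sum>i\<in>{1..k}. (f i + r i)^2)" .
    have "\<epsilon>^2 / (4 * real k) * min_block_ratio k blk b \<le> \<epsilon>^2 / (4 * real k) * (2 * real (card W) / (real (card W) + 1))"
      using ratio by (intro mult_left_mono) auto
    also have "\<dots> = (1 / (2 * real k)) * (real (card W) * \<epsilon>^2 / (real (card W) + 1))"
      by (simp add: field_simps power2_eq_square)
    also have "\<dots> \<le> (1 / (2 * real k)) * (\<Sum>i\<in>{1..k}. (f i + r i)^2)"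
      using sq by (intro mult_left_mono) auto
    finally show ?thesis using surr by simp
  qed
qed

subsection \<open>Upper bound\<close>

lemma two_point_in_prob_simplex:
  assumes "c0 \<in> {1..k}" "c1 \<in> {1..k}" "c0 \<noteq> c1" "0 \<le> t" "t \<le> 1"
  shows "two_point t c0 c1 \<in> prob_simplex k"
  using assms unfolding prob_simplex_def two_point_def by (auto simp: sum.distrib)

lemma label_risk_two_point:
  assumes "c0 \<in> {1..k}" "c1 \<in> {1..k}"
  shows "label_risk k L (two_point t c0 c1) i = t * L i c0 + (1 - t) * L i c1"
  using assms unfolding label_risk_def two_point_def
  by (simp add: distrib_right sum.distrib if_distrib[of "\<lambda>x. x * _"] cong: if_cong)

lemma tie_breaking_square_sum:
  fixes s \<epsilon> \<delta> :: real
  assumes "0 \<le> s"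
  defines "T \<equiv> s * \<epsilon> / (s + 1)"
  shows "(T + \<delta>)^2 + s * (T - \<epsilon>)^2 = s * \<epsilon>^2 / (s + 1) + (2 * T * \<delta> + \<delta>^2)"
proof -
  have "T * (s + 1) = s * \<epsilon>" "s * \<epsilon>^2 / (s + 1) = \<epsilon> * T"
    using assms by (simp_all add: T_def power2_eq_square)
  moreover have "((T + \<delta>)^2 + s * (T - \<epsilon>)^2) - (\<epsilon> * T + (2 * T * \<delta> + \<delta>^2))
      = T * (T * (s + 1) - s * \<epsilon>) - \<epsilon> * (T * (s + 1) - s * \<epsilon>)"
    by (simp add: power2_eq_square algebra_simps)
  ultimately show ?thesis by simp
qed

lemma label_risk_L01b_two_point:
  assumes "c0 \<in> {1..k}" "c1 \<in> {1..k}" "blk c0 \<noteq> blk c1"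
  shows "label_risk k (L01b blk) (two_point t c0 c1) i
           = (if blk i = blk c0 then 1 - t else if blk i = blk c1 then t else 1)"
  using assms by (simp add: label_risk_two_point L01b_def)

lemma excess_surr_block_witness:
  assumes "blk ` {1..k} = {1..b}" "v0 \<in> {1..b}" "u \<in> {1..b}" "u \<noteq> v0"
    and "0 \<le> \<epsilon>" "\<epsilon> \<le> 1" "0 < \<delta>"
  defines "s \<equiv> real (block_size k blk v0)"
  defines "T \<equiv> s * \<epsilon> / (s + 1)"
  obtains f q where "q \<in> prob_simplex k" "excess_loss k (L01b blk) UNIV f q = \<epsilon>"
    "excess_surr k (Phi_quad k (L01b blk)) UNIV f q = (1 / (2 * real k)) * ((T + \<delta>)^2 + s * (T - \<epsilon>)^2)"
proof -
  obtain c0 where c0: "c0 \<in> {1..k}" "blk c0 = v0" using assms(1,2) by (metis imageE)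
  obtain j where j: "j \<in> {1..k}" "blk j = u" using assms(1,3) by (metis imageE)
  have kpos: "k > 0" using c0(1) by simp
  define q where "q = two_point ((1 + \<epsilon>) / 2) c0 j"
  define r where "r = label_risk k (L01b blk) q"
  have q: "q \<in> prob_simplex k"
    unfolding q_def using assms c0 j by (intro two_point_in_prob_simplex) auto
  have r: "r i = (if blk i = v0 then (1 - \<epsilon>) / 2 else if blk i = u then (1 + \<epsilon>) / 2 else 1)" for i
    unfolding r_def q_def using label_risk_L01b_two_point[OF c0(1) j(1)] c0(2) j(2) assms(4)
    by (simp add: field_simps)
  have "T \<le> \<epsilon>"
    unfolding T_def s_def using assms(5) by (simp add: divide_le_eq algebra_simps)
  have T: "0 \<le> T" "T \<le> 1"
    using \<open>T \<le> \<epsilon>\<close> assms(5,6) by (simp add: T_def s_def, linarith)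
  define f where "f i = (if i = j then - (1 + \<epsilon>) / 2 + T + \<delta>
                         else if blk i = v0 then - (1 + \<epsilon>) / 2 + T else - r i)" for i
  have "pred k f = j"
  proof (rule pred_eqI[OF j(1)])
    fix d assume "d \<in> {1..k}" "d \<noteq> j"
    then show "f d < f j"
      using r[of d] j(2) T assms(5,6,7) unfolding f_def by (auto simp: field_simps)
  qed
  moreover have "Min (r ` {1..k}) = r c0"
    using c0 assms(5) by (intro Min_eqI) (auto simp: r)
  ultimately have "excess_loss k (L01b blk) UNIV f q = r j - r c0"
    using excess_loss_UNIV[OF kpos, of "L01b blk" f q] unfolding r_def by simp
  also have "\<dots> = \<epsilon>"
    using j(2) c0(2) assms(4) by (simp add: r field_simps)
  finally have "excess_loss k (L01b blk) UNIV f q = \<epsilon>" .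
  moreover have "(f i + r i)^2 = (if i = j then (T + \<delta>)^2 else 0) + (if blk i = v0 then (T - \<epsilon>)^2 else 0)" for i
    using j(2) assms(4) by (auto simp: f_def r field_simps power2_eq_square)
  then have "(\<Sum>i\<in>{1..k}. (f i + r i)^2) = (T + \<delta>)^2 + s * (T - \<epsilon>)^2"
    using j(1) by (simp add: sum.distrib sum.If_cases s_def block_size_def Int_def conj_commute)
  then have "excess_surr k (Phi_quad k (L01b blk)) UNIV f q = (1 / (2 * real k)) * ((T + \<delta>)^2 + s * (T - \<epsilon>)^2)"
    using excess_surr_Phi_quad[OF q] unfolding r_def by simp
  ultimately show ?thesis using q that by blast
qed

lemma excess_surr_upper_bound:
  assumes "b \<ge> 2" "blk ` {1..k} = {1..b}" "0 \<le> \<epsilon>" "\<epsilon> \<le> 1" "0 < e"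
  obtains f q where "q \<in> prob_simplex k" "\<epsilon> \<le> excess_loss k (L01b blk) UNIV f q"
    "excess_surr k (Phi_quad k (L01b blk)) UNIV f q \<le> \<epsilon>^2 / (4 * real k) * min_block_ratio k blk b + e"
proof -
  have kpos: "k > 0" using assms(1,2) by (cases k) auto
  have "min_block_ratio k blk b \<in> (\<lambda>v. 2 * real (block_size k blk v) / (real (block_size k blk v) + 1)) ` {1..b}"
    using assms(1) by (intro Min_in) auto
  then obtain v0 where v0: "v0 \<in> {1..b}"
    "min_block_ratio k blk b = 2 * real (block_size k blk v0) / (real (block_size k blk v0) + 1)"
    by blast
  define u where "u = (if v0 = 1 then 2 else 1 :: nat)"
  have u: "u \<in> {1..b}" "u \<noteq> v0" using assms(1) by (auto simp: u_def)
  define s where "s = real (block_size k blk v0)"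
  define T where "T = s * \<epsilon> / (s + 1)"
  define \<delta> where "\<delta> = min 1 (real k * e / 2)"
  have \<delta>: "0 < \<delta>" "\<delta> \<le> 1" "\<delta> \<le> real k * e / 2" using kpos assms(5) by (auto simp: \<delta>_def)
  obtain f q where q: "q \<in> prob_simplex k" and loss: "excess_loss k (L01b blk) UNIV f q = \<epsilon>"
    and surr: "excess_surr k (Phi_quad k (L01b blk)) UNIV f q = (1 / (2 * real k)) * ((T + \<delta>)^2 + s * (T - \<epsilon>)^2)"
    using excess_surr_block_witness[OF assms(2) v0(1) u assms(3,4) \<delta>(1)] unfolding s_def T_def .
  have "T \<le> \<epsilon>" "0 \<le> T"
    using assms(3) by (simp_all add: T_def s_def divide_le_eq algebra_simps)
  then have "T * \<delta> \<le> \<delta>" "\<delta> * \<delta> \<le> \<delta>"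
    using assms(4) \<delta>(1,2) by (simp_all add: mult_left_le_one_le)
  then have "2 * T * \<delta> + \<delta>^2 \<le> 3 * \<delta>"
    by (simp add: power2_eq_square)
  then have cost: "(2 * T * \<delta> + \<delta>^2) / (2 * real k) \<le> e"
    using \<delta>(3) kpos mult_pos_pos[OF _ assms(5), of "real k"] by (simp add: pos_divide_le_eq algebra_simps)
  have "0 \<le> s" by (simp add: s_def)
  have "(1 / (2 * real k)) * (s * \<epsilon>^2 / (s + 1)) = \<epsilon>^2 / (4 * real k) * (2 * s / (s + 1))"
    using \<open>0 \<le> s\<close> kpos by (simp add: divide_simps power2_eq_square)
  then have "(1 / (2 * real k)) * ((T + \<delta>)^2 + s * (T - \<epsilon>)^2)
      = \<epsilon>^2 / (4 * real k) * min_block_ratio k blk b + (2 * T * \<delta> + \<delta>^2) / (2 * real k)"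
    unfolding tie_breaking_square_sum[OF \<open>0 \<le> s\<close>, of \<epsilon> \<delta>, folded T_def] v0(2) s_def[symmetric]
    by (simp add: ring_distribs add_divide_distrib)
  with surr cost have "excess_surr k (Phi_quad k (L01b blk)) UNIV f q \<le> \<epsilon>^2 / (4 * real k) * min_block_ratio k blk b + e"
    by linarith
  then show ?thesis by (rule that[OF q, rotated]) (simp add: loss)
qed

lemma Inf_ereal_eqI_approx:
  fixes S :: "ereal set" and m :: real
  assumes "\<And>x. x \<in> S \<Longrightarrow> ereal m \<le> x"
    and "\<And>e. 0 < e \<Longrightarrow> \<exists>x\<in>S. x \<le> ereal (m + e)"
  shows "Inf S = ereal m"
proof (rule antisym)
  show "Inf S \<le> ereal m"
  proof (rule ereal_le_epsilon2)
    fix e :: real assume "0 < e"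
    then obtain x where "x \<in> S" "x \<le> ereal (m + e)" using assms(2) by blast
    then show "Inf S \<le> ereal m + ereal e" by (metis Inf_lower2 plus_ereal.simps(1))
  qed
qed (rule Inf_greatest[OF assms(1)])

theorem proposition13:
  fixes k b :: nat and blk :: "nat \<Rightarrow> nat" and \<epsilon> :: real
  assumes "b \<ge> 2"
    and "blk ` {1..k} = {1..b}"
    and "0 \<le> \<epsilon>" and "\<epsilon> \<le> 1"
  shows "calib k (Phi_quad k (L01b blk)) (L01b blk) UNIV \<epsilon>
           = ereal (\<epsilon>^2 / (4 * real k) *
               Min ((\<lambda>v. 2 * real (block_size k blk v) / (real (block_size k blk v) + 1)) ` {1..b}))
         \<and> \<epsilon>^2 / (4 * real k) *
               Min ((\<lambda>v. 2 * real (block_size k blk v) / (real (block_size k blk v) + 1)) ` {1..b})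
           \<le> \<epsilon>^2 / (2 * real k)"
proof
  have kpos: "k > 0" using assms(1,2) by (cases k) auto
  show "calib k (Phi_quad k (L01b blk)) (L01b blk) UNIV \<epsilon> = ereal (\<epsilon>^2 / (4 * real k) * min_block_ratio k blk b)"
    unfolding calib_def
  proof (rule Inf_ereal_eqI_approx, goal_cases)
    case (1 x)
    then show ?case using excess_surr_lower_bound[OF kpos assms(2,3)] by auto
  next
    case (2 e)
    then obtain f q where "q \<in> prob_simplex k" "\<epsilon> \<le> excess_loss k (L01b blk) UNIV f q"
      "excess_surr k (Phi_quad k (L01b blk)) UNIV f q \<le> \<epsilon>^2 / (4 * real k) * min_block_ratio k blk b + e"
      using excess_surr_upper_bound[OF assms] by blast
    then show ?case by force
  qed
  have "min_block_ratio k blk b \<le> 2 * real (block_size k blk 1) / (real (block_size k blk 1) + 1)"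
    using assms(1) by (intro Min_le) auto
  also have "\<dots> \<le> 2" by (simp add: divide_le_eq)
  finally show "\<epsilon>^2 / (4 * real k) * min_block_ratio k blk b \<le> \<epsilon>^2 / (2 * real k)"
    using mult_left_mono[of _ 2 "\<epsilon>^2 / (4 * real k)"] by simp
qed

end
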